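(* Under the assumptions of Theorem 4.1 (with $k\ge1$), define $$h^{(u)}(D_A)=\min\Big\{H(D_U)+\sum_{t=1}^k H(W_t),\ -\sum_{t=1}^k\log(1-P_{W_t})\Big\}$$ and, writing $\pi=\prod_{t=1}^k P_{W_t}$, $$h^{(l)}(D_A)=\max\Big\{-\sum_{t=1}^k\log P_{W_t},\ H(D_U)+\sum_{t=1}^kH(W_t)+\pi\log\pi+(1-\pi)\log(1-\pi)-(1-\pi)\min\{\log(2^k-1),H(D_U)\}\Big\}.$$ Then $h^{(l)}(D_A)\le H(D_A)\le h^{(u)}(D_A)$.
   Context: A result set $R$ is a finite set of possible matchings $m_j\subseteq C$ with $\mathbb{P}:R\to[0,1]$ summing to 1; the correct matching $M$ is distributed by $\mathbb{P}$. For distinct $c_1,\dots,c_k\in C$ and accuracies $P_{W_1},\dots,P_{W_k}\in[0.5,1]$, the answers $A_{c_t}\in\{Y,N\}$ are conditionally independent given $M$, with $\mathbb{P}(A_{c_t}=Y\mid M)=P_{W_t}$ if $c_t\in M$ and $1-P_{W_t}$ otherwise. $H(D_A)=-\sum_{a\in\{Y,N\}^k}\mathbb{P}(a)\log\mathbb{P}(a)$ is the joint entropy of the answer vector. $U=(\mathbf{1}[c_1\in M],\dots,\mathbf{1}[c_k\in M])\in\{T,F\}^k$ and $H(D_U)$ is its joint entropy, where $\mathbb{P}(U=u)=\sum_{m_j:\ (\mathbf{1}[c_t\in m_j])_t=u}\mathbb{P}(m_j)$. $H(W_t)=-P_{W_t}\log P_{W_t}-(1-P_{W_t})\log(1-P_{W_t})$.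 Logarithms base 2, $0\log0=0$, and $-\log 0=+\infty$ (so the second term of $h^{(u)}$ is $+\infty$ if some $P_{W_t}=1$). *)

theory Defs
  imports Complex_Main "HOL-Library.Extended_Real"
begin

definition plogp :: "real \<Rightarrow> real" where
  "plogp x = (if x = 0 then 0 else x * log 2 x)"

text \<open>Answer vectors / membership vectors of length k (index t = 0..k-1 stands for c_{t+1});
  True = Y (resp. T), False = N (resp. F).\<close>
definition vecs :: "nat \<Rightarrow> bool list set" where
  "vecs k = {xs. length xs = k}"

text \<open>P(A = a): answers conditionally independent given the correct matching M.\<close>
definition probA :: "'c set set \<Rightarrow> ('c set \<Rightarrow> real) \<Rightarrow> (nat \<Rightarrow> 'c) \<Rightarrow> (nat \<Rightarrow> real)
    \<Rightarrow> nat \<Rightarrow> bool list \<Rightarrow> real" where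
  "probA R P c pw k a =
     (\<Sum>m\<in>R. P m * (\<Prod>t<k. if a ! t = (c t \<in> m) then pw t else 1 - pw t))"

definition probU :: "'c set set \<Rightarrow> ('c set \<Rightarrow> real) \<Rightarrow> (nat \<Rightarrow> 'c) \<Rightarrow> nat
    \<Rightarrow> bool list \<Rightarrow> real" where
  "probU R P c k u = (\<Sum>m\<in>{m\<in>R. map (\<lambda>t. c t \<in> m) [0..<k] = u}. P m)"

definition H_A :: "'c set set \<Rightarrow> ('c set \<Rightarrow> real) \<Rightarrow> (nat \<Rightarrow> 'c) \<Rightarrow> (nat \<Rightarrow> real)
    \<Rightarrow> nat \<Rightarrow> real" where
  "H_A R P c pw k = - (\<Sum>a\<in>vecs k. plogp (probA R P c pw k a))"

definition H_U :: "'c set set \<Rightarrow> ('c set \<Rightarrow> real) \<Rightarrow> (nat \<Rightarrow> 'c) \<Rightarrow> nat \<Rightarrow> real" where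
  "H_U R P c k = - (\<Sum>u\<in>vecs k. plogp (probU R P c k u))"

definition H_W :: "real \<Rightarrow> real" where
  "H_W p = - plogp p - plogp (1 - p)"

definition h_upper :: "'c set set \<Rightarrow> ('c set \<Rightarrow> real) \<Rightarrow> (nat \<Rightarrow> 'c) \<Rightarrow> (nat \<Rightarrow> real)
    \<Rightarrow> nat \<Rightarrow> ereal" where
  "h_upper R P c pw k =
     min (ereal (H_U R P c k + (\<Sum>t<k. H_W (pw t))))
         (if \<exists>t<k. pw t = 1 then \<infinity> else ereal (- (\<Sum>t<k. log 2 (1 - pw t))))"

definition h_lower :: "'c set set \<Rightarrow> ('c set \<Rightarrow> real) \<Rightarrow> (nat \<Rightarrow> 'c) \<Rightarrow> (nat \<Rightarrow> real)
    \<Rightarrow> nat \<Rightarrow> real" where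
  "h_lower R P c pw k =
     (let \<pi> = (\<Prod>t<k. pw t) in
      max (- (\<Sum>t<k. log 2 (pw t)))
          (H_U R P c k + (\<Sum>t<k. H_W (pw t)) + plogp \<pi> + plogp (1 - \<pi>)
            - (1 - \<pi>) * min (log 2 (2 ^ k - 1)) (H_U R P c k)))"

end

theory Submission
  imports Defs
begin

text \<open>
  Given the membership vector \<open>U\<close>, the answer vector \<open>A\<close> is the output of \<open>k\<close> independent
  binary symmetric channels, so \<open>P(A = a) = \<Sum>\<^sub>u P(U = u) Q(u, a)\<close> with a product kernel \<open>Q\<close>.
  Upper bounds: \<open>H(A) \<le> H(U, A) = H(U) + \<Sum>\<^sub>t H(W\<^sub>t)\<close>, and every \<open>P(A = a)\<close> is at least
  \<open>\<Prod>\<^sub>t (1 - P\<^sub>W\<^sub>t)\<close>. Lower bounds: every \<open>P(A = a)\<close> is at most \<open>\<pi>\<close>, and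
  \<open>H(A) = H(U, A) - H(U | A)\<close>, where the equivocation \<open>H(U | A)\<close> splits into the event \<open>U = A\<close>,
  of probability \<open>\<pi>\<close>, and its complement; the log-sum inequality bounds the two parts as in
  Fano's inequality, the second one either through the \<open>2\<^sup>k - 1\<close> wrong answers or through \<open>H(U)\<close>.
\<close>

lemma plogp_eq: "plogp x = x * log 2 x"
  by (simp add: plogp_def)

lemma plogp_mult:
  assumes "0 \<le> x" "0 \<le> y"
  shows "plogp (x * y) = y * plogp x + x * plogp y"
  using assms by (cases "x = 0 \<or> y = 0") (auto simp: plogp_eq log_mult algebra_simps)

lemma log_prod:
  fixes f :: "'i \<Rightarrow> real"
  assumes "finite I" "\<And>i. i \<in> I \<Longrightarrow> f i \<noteq> 0"
  shows "log b (prod f I) = (\<Sum>i\<in>I. log b (f i))"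
  using ln_prod[OF assms] by (simp add: log_def sum_divide_distrib)

lemma ln_ratio_tangent_bound:
  fixes x y S T :: real
  assumes "0 < x" "0 < y" "0 < S" "0 < T"
  shows "x * ln (S / T) + x - y * S / T \<le> x * ln (x / y)"
proof -
  define z where "z = y * S / (x * T)"
  have "0 < z" using assms by (simp add: z_def)
  have "ln z = ln y + ln S - ln x - ln T"
    using assms by (simp add: z_def ln_div ln_mult)
  with ln_le_minus_one[OF \<open>0 < z\<close>] have "x * (1 - z) \<le> x * (ln (x / y) - ln (S / T))"
    using assms by (intro mult_left_mono) (auto simp: ln_div)
  moreover have "x * (1 - z) = x - y * S / T" using assms by (simp add: z_def field_simps)
  ultimately show ?thesis by (simp add: algebra_simps)
qed

lemma log_sum_inequality:
  fixes x y :: "'i \<Rightarrow> real"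
  assumes "finite I" "1 < b" and x: "\<forall>i\<in>I. 0 \<le> x i" and y: "\<forall>i\<in>I. 0 \<le> y i"
    and support: "\<forall>i\<in>I. 0 < x i \<longrightarrow> 0 < y i"
    and S: "sum x I = S" and T: "sum y I \<le> T" "0 < T"
  shows "S * log b (S / T) \<le> (\<Sum>i\<in>I. x i * log b (x i / y i))"
proof (cases "S = 0")
  case True
  then have "\<forall>i\<in>I. x i = 0" using S x \<open>finite I\<close> sum_nonneg_eq_0_iff by blast
  with True show ?thesis by simp
next
  case False
  with S x have "0 < S" using sum_nonneg[of I x] by force
  have "x i * ln (S / T) + x i - y i * S / T \<le> x i * ln (x i / y i)" if "i \<in> I" for i
    using ln_ratio_tangent_bound[of "x i" "y i" S T] x y support that \<open>0 < S\<close> T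
    by (cases "x i = 0") auto
  then have "(\<Sum>i\<in>I. x i * ln (S / T) + x i - y i * S / T) \<le> (\<Sum>i\<in>I. x i * ln (x i / y i))"
    by (rule sum_mono)
  moreover have "(\<Sum>i\<in>I. x i * ln (S / T) + x i - y i * S / T)
      = S * ln (S / T) + S - sum y I * S / T"
    using S by (simp add: sum.distrib sum_subtractf sum_distrib_right[symmetric]
        sum_divide_distrib[symmetric])
  moreover have "sum y I * S / T \<le> S"
    using T \<open>0 < S\<close> by (simp add: field_simps mult_right_mono)
  ultimately have "S * ln (S / T) / ln b \<le> (\<Sum>i\<in>I. x i * ln (x i / y i)) / ln b"
    using \<open>1 < b\<close> by (intro divide_right_mono) auto
  then show ?thesis
    by (simp add: log_def sum_divide_distrib[symmetric])
qed

lemma vecs_0: "vecs 0 = {[]}"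
  by (auto simp: vecs_def)

lemma vecs_Suc: "vecs (Suc k) = (\<lambda>(b, xs). b # xs) ` (UNIV \<times> vecs k)"
  by (auto simp: vecs_def image_iff length_Suc_conv)

lemma finite_vecs: "finite (vecs k)"
  by (induction k) (auto simp: vecs_0 vecs_Suc)

lemma sum_vecs_prod:
  fixes f :: "nat \<Rightarrow> bool \<Rightarrow> 'a::comm_semiring_1"
  shows "(\<Sum>a\<in>vecs k. \<Prod>t<k. f t (a ! t)) = (\<Prod>t<k. f t True + f t False)"
proof (induction k arbitrary: f)
  case 0
  then show ?case by (simp add: vecs_0)
next
  case (Suc k)
  have "inj_on (\<lambda>(b, xs). b # xs) (UNIV \<times> vecs k)"
    by (auto simp: inj_on_def)
  then have "(\<Sum>a\<in>vecs (Suc k). \<Prod>t<Suc k. f t (a ! t))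
      = (\<Sum>(b, xs)\<in>UNIV \<times> vecs k. \<Prod>t<Suc k. f t ((b # xs) ! t))"
    unfolding vecs_Suc by (subst sum.reindex) (simp_all add: case_prod_unfold)
  also have "\<dots> = (\<Sum>b\<in>UNIV. \<Sum>xs\<in>vecs k. f 0 b * (\<Prod>t<k. f (Suc t) (xs ! t)))"
    by (subst sum.cartesian_product[symmetric])
      (simp del: prod.lessThan_Suc add: prod.lessThan_Suc_shift)
  also have "\<dots> = (\<Sum>b\<in>UNIV. f 0 b * (\<Prod>t<k. f (Suc t) True + f (Suc t) False))"
    using Suc.IH[of "\<lambda>t. f (Suc t)"] by (simp add: sum_distrib_left[symmetric])
  also have "\<dots> = (\<Prod>t<Suc k. f t True + f t False)"
    by (simp del: prod.lessThan_Suc add: UNIV_bool prod.lessThan_Suc_shift algebra_simps)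
  finally show ?case .
qed

lemma card_vecs: "card (vecs k) = 2 ^ k"
  using sum_vecs_prod[where f = "\<lambda>_ _. 1::nat" and k = k] by (simp add: numeral_2_eq_2)

lemma sum_square_diag_off:
  assumes "finite A"
  shows "(\<Sum>u\<in>A. \<Sum>a\<in>A. g u a)
           = (\<Sum>a\<in>A. g a a) + (\<Sum>p\<in>{p \<in> A \<times> A. fst p \<noteq> snd p}. g (fst p) (snd p))"
proof -
  define D where "D = (\<lambda>a. (a, a)) ` A"
  define Off where "Off = {p \<in> A \<times> A. fst p \<noteq> snd p}"
  have "A \<times> A = D \<union> Off" "D \<inter> Off = {}"
    by (auto simp: D_def Off_def)
  moreover have "finite D" "finite Off"
    unfolding D_def Off_def using assms by (auto intro: finite_subset[of _ "A \<times> A"])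
  ultimately have "(\<Sum>p\<in>A \<times> A. g (fst p) (snd p))
      = (\<Sum>p\<in>D. g (fst p) (snd p)) + (\<Sum>p\<in>Off. g (fst p) (snd p))"
    by (simp add: sum.union_disjoint)
  also have "(\<Sum>p\<in>D. g (fst p) (snd p)) = (\<Sum>a\<in>A. g a a)"
    unfolding D_def by (subst sum.reindex) (auto simp: inj_on_def)
  finally show ?thesis
    by (simp add: sum.cartesian_product case_prod_unfold Off_def)
qed

definition answer_prob :: "(nat \<Rightarrow> real) \<Rightarrow> bool list \<Rightarrow> nat \<Rightarrow> bool \<Rightarrow> real" where
  "answer_prob pw u t b = (if b = u ! t then pw t else 1 - pw t)"

definition answers_prob :: "(nat \<Rightarrow> real) \<Rightarrow> nat \<Rightarrow> bool list \<Rightarrow> bool list \<Rightarrow> real" where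
  "answers_prob pw k u a = (\<Prod>t<k. answer_prob pw u t (a ! t))"

lemma answer_prob_sum: "answer_prob pw u t True + answer_prob pw u t False = 1"
  by (cases "u ! t") (auto simp: answer_prob_def)

lemma sum_answers_prob: "(\<Sum>a\<in>vecs k. answers_prob pw k u a) = 1"
  unfolding answers_prob_def by (simp add: sum_vecs_prod answer_prob_sum)

lemma answers_prob_nonneg:
  assumes "\<forall>t<k. 0 \<le> pw t \<and> pw t \<le> 1"
  shows "0 \<le> answers_prob pw k u a"
  unfolding answers_prob_def answer_prob_def using assms by (intro prod_nonneg) auto

lemma answers_prob_diag: "answers_prob pw k a a = (\<Prod>t<k. pw t)"
  by (simp add: answers_prob_def answer_prob_def)

lemma answers_prob_bounds:
  assumes "\<forall>t<k. 1/2 \<le> pw t \<and> pw t \<le> 1"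
  shows "(\<Prod>t<k. 1 - pw t) \<le> answers_prob pw k u a" "answers_prob pw k u a \<le> (\<Prod>t<k. pw t)"
  unfolding answers_prob_def answer_prob_def using assms by (auto intro!: prod_mono)

lemma plogp_answers_prob:
  "plogp (answers_prob pw k u a) = answers_prob pw k u a * (\<Sum>t<k. log 2 (answer_prob pw u t (a ! t)))"
proof (cases "answers_prob pw k u a = 0")
  case True
  then show ?thesis by (simp add: plogp_def)
next
  case False
  then have "answer_prob pw u t (a ! t) \<noteq> 0" if "t < k" for t
    using that unfolding answers_prob_def by auto
  then show ?thesis
    unfolding plogp_eq by (subst (2) answers_prob_def, subst log_prod) auto
qed

lemma sum_answers_prob_log_answer_prob:
  assumes "t < k"
  shows "(\<Sum>a\<in>vecs k. answers_prob pw k u a * log 2 (answer_prob pw u t (a ! t)))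
           = plogp (pw t) + plogp (1 - pw t)"
proof -
  define g where "g s b = answer_prob pw u s b * (if s = t then log 2 (answer_prob pw u s b) else 1)"
    for s b
  have "(\<Sum>a\<in>vecs k. answers_prob pw k u a * log 2 (answer_prob pw u t (a ! t)))
      = (\<Sum>a\<in>vecs k. \<Prod>s<k. g s (a ! s))"
    unfolding g_def answers_prob_def prod.distrib using assms by simp
  also have "\<dots> = (\<Prod>s<k. if s = t then g t True + g t False else 1)"
    unfolding sum_vecs_prod by (rule prod.cong) (auto simp: g_def answer_prob_sum)
  also have "\<dots> = plogp (pw t) + plogp (1 - pw t)"
    using assms by (cases "u ! t") (auto simp: g_def answer_prob_def plogp_eq)
  finally show ?thesis .
qed

lemma sum_plogp_answers_prob:
  "(\<Sum>a\<in>vecs k. plogp (answers_prob pw k u a)) = (\<Sum>t<k. plogp (pw t) + plogp (1 - pw t))"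
proof -
  have "(\<Sum>a\<in>vecs k. plogp (answers_prob pw k u a))
      = (\<Sum>t<k. \<Sum>a\<in>vecs k. answers_prob pw k u a * log 2 (answer_prob pw u t (a ! t)))"
    by (simp add: plogp_answers_prob sum_distrib_left sum.swap[of _ "vecs k"])
  then show ?thesis
    by (simp add: sum_answers_prob_log_answer_prob)
qed

locale noisy_answers =
  fixes k :: nat and pw :: "nat \<Rightarrow> real" and pU pA :: "bool list \<Rightarrow> real"
  assumes accuracy: "\<forall>t<k. 1/2 \<le> pw t \<and> pw t \<le> 1"
    and pU_nonneg: "\<forall>u\<in>vecs k. 0 \<le> pU u"
    and sum_pU: "(\<Sum>u\<in>vecs k. pU u) = 1"
    and pA_eq: "\<And>a. pA a = (\<Sum>u\<in>vecs k. pU u * answers_prob pw k u a)"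
begin

abbreviation "V \<equiv> vecs k"
abbreviation "\<pi> \<equiv> \<Prod>t<k. pw t"

definition "Off = {p \<in> V \<times> V. fst p \<noteq> snd p}"

lemma finite_Off: "finite Off"
  unfolding Off_def by (rule finite_subset[of _ "V \<times> V"]) (auto simp: finite_vecs)

lemma sum_diag_off:
  "(\<Sum>u\<in>V. \<Sum>a\<in>V. g u a) = (\<Sum>a\<in>V. g a a) + (\<Sum>p\<in>Off. g (fst p) (snd p))"
  unfolding Off_def by (rule sum_square_diag_off[OF finite_vecs])

definition "joint u a = pU u * answers_prob pw k u a"

definition "entropy_A = - (\<Sum>a\<in>V. plogp (pA a))"
definition "entropy_U = - (\<Sum>u\<in>V. plogp (pU u))"
definition "entropy_W = (\<Sum>t<k. H_W (pw t))"

text \<open>\<open>joint u a / pA a = P(U = u | A = a)\<close>, so summing these terms gives \<open>- H(U | A)\<close>.\<close>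
definition "posterior_term u a = joint u a * log 2 (joint u a / pA a)"

lemma accuracy_unit_interval: "\<forall>t<k. 0 \<le> pw t \<and> pw t \<le> 1"
  using accuracy by auto

lemma joint_nonneg: "u \<in> V \<Longrightarrow> 0 \<le> joint u a"
  using pU_nonneg answers_prob_nonneg[OF accuracy_unit_interval] by (simp add: joint_def)

lemma joint_le_pA: "u \<in> V \<Longrightarrow> joint u a \<le> pA a"
  using member_le_sum[of u V "\<lambda>v. joint v a"] joint_nonneg
  by (simp add: finite_vecs pA_eq joint_def)

lemma pA_nonneg: "0 \<le> pA a"
  unfolding pA_eq using pU_nonneg answers_prob_nonneg[OF accuracy_unit_interval]
  by (intro sum_nonneg) auto

lemma sum_pA: "(\<Sum>a\<in>V. pA a) = 1"
  unfolding pA_eq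
  by (simp add: sum.swap[of _ V] sum_distrib_left[symmetric] sum_answers_prob sum_pU)

lemma pi_le_1: "\<pi> \<le> 1"
  using accuracy by (intro prod_le_1) auto

lemma pA_bounds: "(\<Prod>t<k. 1 - pw t) \<le> pA a" "pA a \<le> \<pi>"
proof -
  have "pA a \<le> (\<Sum>u\<in>V. pU u * \<pi>)" "(\<Sum>u\<in>V. pU u * (\<Prod>t<k. 1 - pw t)) \<le> pA a"
    unfolding pA_eq using answers_prob_bounds[OF accuracy] pU_nonneg
    by (auto intro!: sum_mono mult_left_mono)
  then show "(\<Prod>t<k. 1 - pw t) \<le> pA a" "pA a \<le> \<pi>"
    by (simp_all add: sum_distrib_right[symmetric] sum_pU)
qed

lemma sum_joint_diag: "(\<Sum>a\<in>V. joint a a) = \<pi>"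
  by (simp add: joint_def answers_prob_diag sum_distrib_right[symmetric] sum_pU)

lemma sum_joint_off: "(\<Sum>p\<in>Off. joint (fst p) (snd p)) = 1 - \<pi>"
  using sum_diag_off[of joint] sum_joint_diag
  by (simp add: joint_def sum_distrib_left[symmetric] sum_answers_prob sum_pU)

lemma joint_entropy: "- (\<Sum>u\<in>V. \<Sum>a\<in>V. plogp (joint u a)) = entropy_U + entropy_W"
proof -
  have "(\<Sum>u\<in>V. \<Sum>a\<in>V. plogp (joint u a))
      = (\<Sum>u\<in>V. \<Sum>a\<in>V. answers_prob pw k u a * plogp (pU u) + pU u * plogp (answers_prob pw k u a))"
    unfolding joint_def using pU_nonneg answers_prob_nonneg[OF accuracy_unit_interval]
    by (intro sum.cong refl plogp_mult) auto
  also have "\<dots> = (\<Sum>u\<in>V. plogp (pU u) + pU u * (\<Sum>t<k. plogp (pw t) + plogp (1 - pw t)))"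
    by (simp add: sum.distrib sum_distrib_left[symmetric] sum_distrib_right[symmetric]
        sum_answers_prob sum_plogp_answers_prob)
  also have "\<dots> = - entropy_U - entropy_W"
    by (simp add: sum.distrib sum_distrib_right[symmetric] sum_pU entropy_U_def entropy_W_def
        H_W_def sum_subtractf sum_negf)
  finally show ?thesis by simp
qed

lemma entropy_A_le_joint_entropy: "entropy_A \<le> - (\<Sum>u\<in>V. \<Sum>a\<in>V. plogp (joint u a))"
proof -
  have "plogp (joint u a) \<le> joint u a * log 2 (pA a)" if "u \<in> V" for u a
  proof (cases "joint u a = 0")
    case True
    then show ?thesis by (simp add: plogp_def)
  next
    case False
    then have "0 < joint u a" using joint_nonneg[OF that, of a] by auto
    then show ?thesis
      unfolding plogp_eq using joint_le_pA[OF that] by (intro mult_left_mono log_mono) auto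
  qed
  then have "(\<Sum>a\<in>V. \<Sum>u\<in>V. plogp (joint u a)) \<le> (\<Sum>a\<in>V. \<Sum>u\<in>V. joint u a * log 2 (pA a))"
    by (intro sum_mono) auto
  also have "\<dots> = (\<Sum>a\<in>V. plogp (pA a))"
    by (simp add: plogp_eq sum_distrib_right[symmetric] pA_eq joint_def)
  finally show ?thesis
    unfolding entropy_A_def using sum.swap[of "\<lambda>u a. plogp (joint u a)" V V] by simp
qed

lemma entropy_A_le_sum_neg_log_error:
  assumes "\<forall>t<k. pw t \<noteq> 1"
  shows "entropy_A \<le> - (\<Sum>t<k. log 2 (1 - pw t))"
proof -
  define \<beta> where "\<beta> = (\<Prod>t<k. 1 - pw t)"
  have "0 < \<beta>" unfolding \<beta>_def using assms accuracy by (intro prod_pos) force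
  then have "pA a * log 2 \<beta> \<le> plogp (pA a)" for a
    unfolding plogp_eq using pA_bounds(1)[of a] by (intro mult_left_mono log_mono) (auto simp: \<beta>_def)
  then have "(\<Sum>a\<in>V. pA a * log 2 \<beta>) \<le> (\<Sum>a\<in>V. plogp (pA a))"
    by (rule sum_mono)
  moreover have "log 2 \<beta> = (\<Sum>t<k. log 2 (1 - pw t))"
    unfolding \<beta>_def using assms accuracy by (intro log_prod) force+
  ultimately show ?thesis
    unfolding entropy_A_def by (simp add: sum_distrib_right[symmetric] sum_pA)
qed

lemma sum_neg_log_accuracy_le_entropy_A: "- (\<Sum>t<k. log 2 (pw t)) \<le> entropy_A"
proof -
  have "plogp (pA a) \<le> pA a * log 2 \<pi>" for a
  proof (cases "pA a = 0")
    case True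
    then show ?thesis by (simp add: plogp_def)
  next
    case False
    then show ?thesis
      unfolding plogp_eq using pA_nonneg[of a] pA_bounds(2)[of a]
      by (intro mult_left_mono log_mono) auto
  qed
  then have "(\<Sum>a\<in>V. plogp (pA a)) \<le> (\<Sum>a\<in>V. pA a * log 2 \<pi>)"
    by (rule sum_mono)
  moreover have "log 2 \<pi> = (\<Sum>t<k. log 2 (pw t))"
    using accuracy by (intro log_prod) force+
  ultimately show ?thesis
    unfolding entropy_A_def by (simp add: sum_distrib_right[symmetric] sum_pA)
qed

lemma entropy_A_eq_joint_minus_equivocation:
  "entropy_A = entropy_U + entropy_W + (\<Sum>u\<in>V. \<Sum>a\<in>V. posterior_term u a)"
proof -
  have "posterior_term u a = plogp (joint u a) - joint u a * log 2 (pA a)" if "u \<in> V" for u a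
  proof (cases "joint u a = 0")
    case True
    then show ?thesis by (simp add: posterior_term_def plogp_def)
  next
    case False
    then have "0 < joint u a" using joint_nonneg[OF that, of a] by auto
    moreover have "0 < pA a" using joint_le_pA[OF that, of a] calculation by linarith
    ultimately show ?thesis
      by (simp add: posterior_term_def plogp_eq log_divide_pos algebra_simps)
  qed
  then have "(\<Sum>u\<in>V. \<Sum>a\<in>V. posterior_term u a)
      = (\<Sum>u\<in>V. \<Sum>a\<in>V. plogp (joint u a)) - (\<Sum>a\<in>V. \<Sum>u\<in>V. joint u a * log 2 (pA a))"
    using sum.swap[of "\<lambda>u a. joint u a * log 2 (pA a)" V V] by (simp add: sum_subtractf)
  also have "(\<Sum>a\<in>V. \<Sum>u\<in>V. joint u a * log 2 (pA a)) = - entropy_A"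
    by (simp add: entropy_A_def plogp_eq sum_distrib_right[symmetric] pA_eq joint_def)
  finally show ?thesis using joint_entropy by linarith
qed

lemma plogp_pi_le_posterior_diag: "plogp \<pi> \<le> (\<Sum>a\<in>V. posterior_term a a)"
proof -
  have "\<pi> * log 2 (\<pi> / 1) \<le> (\<Sum>a\<in>V. joint a a * log 2 (joint a a / pA a))"
    using joint_nonneg pA_nonneg joint_le_pA sum_joint_diag sum_pA
    by (intro log_sum_inequality) (auto simp: finite_vecs intro: less_le_trans)
  then show ?thesis by (simp add: posterior_term_def plogp_eq)
qed

lemma posterior_off_ge_log_card:
  assumes "1 \<le> k"
  shows "plogp (1 - \<pi>) - (1 - \<pi>) * log 2 (2 ^ k - 1) \<le> (\<Sum>p\<in>Off. posterior_term (fst p) (snd p))"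
proof -
  have "(2::real) ^ 1 \<le> 2 ^ k" using assms by (intro power_increasing) auto
  then have "(0::real) < 2 ^ k - 1" by simp
  have "(\<Sum>p\<in>Off. pA (snd p)) = 2 ^ k - 1"
    using sum_diag_off[of "\<lambda>u a. pA a"] by (simp add: sum_pA card_vecs)
  then have "(1 - \<pi>) * log 2 ((1 - \<pi>) / (2 ^ k - 1))
      \<le> (\<Sum>p\<in>Off. joint (fst p) (snd p) * log 2 (joint (fst p) (snd p) / pA (snd p)))"
    using joint_nonneg pA_nonneg joint_le_pA sum_joint_off \<open>0 < 2 ^ k - 1\<close>
    by (intro log_sum_inequality finite_Off) (auto simp: Off_def intro: less_le_trans)
  moreover have "(1 - \<pi>) * log 2 ((1 - \<pi>) / (2 ^ k - 1))
      = plogp (1 - \<pi>) - (1 - \<pi>) * log 2 (2 ^ k - 1)"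
    using pi_le_1 \<open>0 < 2 ^ k - 1\<close>
    by (cases "\<pi> = 1") (simp_all add: plogp_eq log_divide_pos algebra_simps)
  ultimately show ?thesis by (simp add: posterior_term_def)
qed

text \<open>Apply the log-sum inequality against the product distribution \<open>pU u * pA a\<close>.\<close>
lemma posterior_off_ge_entropy_U:
  "plogp (1 - \<pi>) - (1 - \<pi>) * entropy_U \<le> (\<Sum>p\<in>Off. posterior_term (fst p) (snd p))"
proof -
  have pU_pos: "0 < pU u" if "u \<in> V" "0 < joint u a" for u a
    using that pU_nonneg by (auto simp: joint_def less_le)
  have pA_pos: "0 < pA a" if "u \<in> V" "0 < joint u a" for u a
    using that joint_le_pA by (auto intro: less_le_trans)
  have "(\<Sum>p\<in>Off. pU (fst p) * pA (snd p)) \<le> 1"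
    using sum_diag_off[of "\<lambda>u a. pU u * pA a"] pU_nonneg pA_nonneg
      sum_nonneg[of V "\<lambda>a. pU a * pA a"]
    by (simp add: sum_distrib_left[symmetric] sum_distrib_right[symmetric] sum_pA sum_pU)
  then have "(1 - \<pi>) * log 2 ((1 - \<pi>) / 1) \<le> (\<Sum>p\<in>Off.
      joint (fst p) (snd p) * log 2 (joint (fst p) (snd p) / (pU (fst p) * pA (snd p))))"
    using joint_nonneg pA_nonneg pU_nonneg sum_joint_off pU_pos pA_pos
    by (intro log_sum_inequality finite_Off) (auto simp: Off_def)
  moreover have split_posterior: "posterior_term u a
      = joint u a * log 2 (joint u a / (pU u * pA a)) + joint u a * log 2 (pU u)"
    if "u \<in> V" for u a
  proof (cases "joint u a = 0")
    case True
    then show ?thesis by (simp add: posterior_term_def)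
  next
    case False
    then have "0 < joint u a" using joint_nonneg[OF that, of a] by auto
    then show ?thesis using pU_pos[OF that] pA_pos[OF that]
      by (simp add: posterior_term_def log_divide_pos log_mult_pos algebra_simps)
  qed
  moreover have "(\<Sum>p\<in>Off. joint (fst p) (snd p) * log 2 (pU (fst p))) = - ((1 - \<pi>) * entropy_U)"
  proof -
    have "(\<Sum>u\<in>V. \<Sum>a\<in>V. joint u a * log 2 (pU u)) = - entropy_U"
      by (simp add: joint_def entropy_U_def plogp_eq sum_negf mult.commute[of "pU _"] mult.assoc
          sum_distrib_left[symmetric] sum_distrib_right[symmetric] sum_answers_prob)
    moreover have "(\<Sum>a\<in>V. joint a a * log 2 (pU a)) = - (\<pi> * entropy_U)"
      by (simp add: joint_def entropy_U_def plogp_eq answers_prob_diag sum_distrib_left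
          algebra_simps)
    ultimately show ?thesis
      using sum_diag_off[of "\<lambda>u a. joint u a * log 2 (pU u)"] by (simp add: algebra_simps)
  qed
  moreover have "(\<Sum>p\<in>Off. posterior_term (fst p) (snd p))
      = (\<Sum>p\<in>Off. joint (fst p) (snd p) * log 2 (joint (fst p) (snd p) / (pU (fst p) * pA (snd p))))
        + (\<Sum>p\<in>Off. joint (fst p) (snd p) * log 2 (pU (fst p)))"
    unfolding sum.distrib[symmetric] by (rule sum.cong) (auto simp: Off_def split_posterior)
  ultimately show ?thesis by (simp add: plogp_eq)
qed

lemma fano_lower_bound:
  assumes "1 \<le> k"
  shows "entropy_U + entropy_W + plogp \<pi> + plogp (1 - \<pi>)
           - (1 - \<pi>) * min (log 2 (2 ^ k - 1)) entropy_U \<le> entropy_A"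
  using entropy_A_eq_joint_minus_equivocation sum_diag_off[of posterior_term]
    plogp_pi_le_posterior_diag posterior_off_ge_log_card[OF assms] posterior_off_ge_entropy_U
    pi_le_1
  by (cases "log 2 (2 ^ k - 1) \<le> entropy_U") (simp_all add: min_def)

end

lemma noisy_answers_result_set:
  assumes "finite R" "\<forall>m\<in>R. 0 \<le> P m" "(\<Sum>m\<in>R. P m) = 1"
    and "\<forall>t<k. 1/2 \<le> pw t \<and> pw t \<le> 1"
  shows "noisy_answers k pw (probU R P c k) (probA R P c pw k)"
proof
  define vec where "vec m = map (\<lambda>t. c t \<in> m) [0..<k]" for m
  have vec_vecs: "vec ` R \<subseteq> vecs k" by (auto simp: vec_def vecs_def)
  have probU_vec: "probU R P c k u = (\<Sum>m\<in>{m\<in>R. vec m = u}. P m)" for u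
    by (simp add: probU_def vec_def)
  show "(\<Sum>u\<in>vecs k. probU R P c k u) = 1"
    unfolding probU_vec using sum.group[OF assms(1) finite_vecs vec_vecs, of P] assms(3) by simp
  show "\<forall>u\<in>vecs k. 0 \<le> probU R P c k u"
    unfolding probU_vec using assms(2) by (auto intro: sum_nonneg)
  show "\<forall>t<k. 1/2 \<le> pw t \<and> pw t \<le> 1" by fact
  fix a
  have "probA R P c pw k a = (\<Sum>m\<in>R. P m * answers_prob pw k (vec m) a)"
    unfolding probA_def answers_prob_def answer_prob_def vec_def
    by (intro sum.cong refl arg_cong[where f="\<lambda>x. P _ * x"] prod.cong) auto
  also have "\<dots> = (\<Sum>u\<in>vecs k. \<Sum>m\<in>{m\<in>R. vec m = u}. P m * answers_prob pw k (vec m) a)"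
    using sum.group[OF assms(1) finite_vecs vec_vecs, of "\<lambda>m. P m * answers_prob pw k (vec m) a"]
    by simp
  also have "\<dots> = (\<Sum>u\<in>vecs k. probU R P c k u * answers_prob pw k u a)"
    unfolding probU_vec by (intro sum.cong refl) (simp add: sum_distrib_right)
  finally show "probA R P c pw k a = (\<Sum>u\<in>vecs k. probU R P c k u * answers_prob pw k u a)" .
qed

theorem theorem4p2:
  fixes C :: "'c set" and R :: "'c set set" and P :: "'c set \<Rightarrow> real"
    and c :: "nat \<Rightarrow> 'c" and pw :: "nat \<Rightarrow> real" and k :: nat
  assumes "finite R"
    and "\<forall>m\<in>R. m \<subseteq> C"
    and "\<forall>m\<in>R. 0 \<le> P m \<and> P m \<le> 1"
    and "(\<Sum>m\<in>R. P m) = 1"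
    and "k \<ge> 1"
    and "inj_on c {..<k}"
    and "\<forall>t<k. c t \<in> C"
    and "\<forall>t<k. 1/2 \<le> pw t \<and> pw t \<le> 1"
  shows "h_lower R P c pw k \<le> H_A R P c pw k
       \<and> ereal (H_A R P c pw k) \<le> h_upper R P c pw k"
proof -
  interpret noisy_answers k pw "probU R P c k" "probA R P c pw k"
    using assms(1,3,4,8) by (intro noisy_answers_result_set) auto
  have entropies: "H_A R P c pw k = entropy_A" "H_U R P c k = entropy_U"
      "(\<Sum>t<k. H_W (pw t)) = entropy_W"
    by (simp_all add: H_A_def entropy_A_def H_U_def entropy_U_def entropy_W_def)
  have "entropy_A \<le> entropy_U + entropy_W"
    using entropy_A_le_joint_entropy joint_entropy by simp
  then show ?thesis
    unfolding h_lower_def h_upper_def Let_def entropies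
    using sum_neg_log_accuracy_le_entropy_A fano_lower_bound[OF assms(5)]
      entropy_A_le_sum_neg_log_error
    by auto
qed

end
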